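(* Let $X,Z\in\mathbb{R}^{n\times r}$ with $XX^{T}\ne ZZ^{T}$. Let $Z_{\perp}=(I-XX^{\dagger})Z$, $$\alpha=\frac{\|Z_{\perp}Z_{\perp}^{T}\|_{F}}{\|XX^{T}-ZZ^{T}\|_{F}},\qquad\beta=\frac{\sigma_{\min}^{2}(X)}{\|XX^{T}-ZZ^{T}\|_{F}}\cdot\frac{\mathrm{tr}(Z_{\perp}Z_{\perp}^{T})}{\|Z_{\perp}Z_{\perp}^{T}\|_{F}},$$ and for $t\ge0$ let $$\psi(\alpha,\beta,t)=\begin{cases}(t/\beta)\alpha+\sqrt{1-(t/\beta)^{2}}\sqrt{1-\alpha^{2}} & \text{if }t/\beta\le\alpha,\\ 1 & \text{if }t/\beta>\alpha.\end{cases}$$ If $\beta>0$, then $\cos\theta(t)\ge\psi(\alpha,\beta,t)$ for all $t\ge0$.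
   Context: $\mathbf{e}=\mathrm{vec}(XX^{T}-ZZ^{T})\in\mathbb{R}^{n^{2}}$ (column-stacking) and $\mathbf{J}\in\mathbb{R}^{n^{2}\times nr}$ satisfies $\mathbf{J}\,\mathrm{vec}(Y)=\mathrm{vec}(XY^{T}+YX^{T})$ for all $Y\in\mathbb{R}^{n\times r}$. For $t\ge0$, $\cos\theta(t)$ is the maximum of $\frac{\mathbf{e}^{T}[\mathbf{J}y-w]}{\|\mathbf{e}\|\|\mathbf{J}y-w\|}$ over $y\in\mathbb{R}^{nr}$ and $W_{i,j}\in\mathbb{R}^{n\times n}$ ($i,j=1,\dots,r$) subject to $\frac{\langle\mathbf{J}^{T}\mathbf{J},W\rangle}{\|\mathbf{e}\|\|\mathbf{J}y-w\|}=2t$ and $W\succeq0$, where $W=[W_{i,j}]_{i,j=1}^{r}$ and $w=\sum_{i=1}^{r}\mathrm{vec}(W_{i,i})$. $A^{\dagger}$ is the pseudoinverse and $\sigma_{\min}(X)$ the $r$-th singular value of $X$. *)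

theory Defs
  imports "HOL-Analysis.Analysis"
begin

text \<open>Matrices are \<open>real^'c^'r\<close> (rows indexed by 'r, columns by 'c).
  Column stacking: for an m x k matrix M, vecm M is indexed by pairs (j,i) with
  j the column index and i the row index, i.e. the block of column j comes as
  one contiguous block.  So R^(nr) = real^('r \<times> 'n) and R^(n^2) = real^('n \<times> 'n).\<close>

definition vecm :: "real^'c^'m \<Rightarrow> real^('c \<times> 'm)" where
  "vecm M = (\<chi> p. M $ snd p $ fst p)"

definition frob_norm :: "real^'c^'m \<Rightarrow> real" where
  "frob_norm A = sqrt (\<Sum>i\<in>UNIV. \<Sum>j\<in>UNIV. (A $ i $ j)^2)"

definition frob_inner :: "real^'c^'m \<Rightarrow> real^'c^'m \<Rightarrow> real" where
  "frob_inner A B = (\<Sum>i\<in>UNIV. \<Sum>j\<in>UNIV. A $ i $ j * B $ i $ j)"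

definition pinv :: "real^'c^'m \<Rightarrow> real^'m^'c" where
  "pinv A = (THE B. A ** B ** A = A \<and> B ** A ** B = B \<and>
                    transpose (A ** B) = A ** B \<and> transpose (B ** A) = B ** A)"

definition sigma_min :: "real^'r^'n \<Rightarrow> real" where
  "sigma_min X = sqrt (Min {l. \<exists>v. v \<noteq> 0 \<and> (transpose X ** X) *v v = l *s v})"

definition psd :: "real^'k^'k \<Rightarrow> bool" where
  "psd W \<longleftrightarrow> transpose W = W \<and> (\<forall>x. 0 \<le> x \<bullet> (W *v x))"

definition jac :: "real^'r::finite^'n::finite \<Rightarrow> real^('r \<times> 'n)^('n \<times> 'n)" where
  "jac X = (THE J. \<forall>Y :: real^'r^'n.
              J *v vecm Y = vecm (X ** transpose Y + Y ** transpose X))"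

definition err_vec :: "real^'r^'n \<Rightarrow> real^'r^'n \<Rightarrow> real^('n \<times> 'n)" where
  "err_vec X Z = vecm (X ** transpose X - Z ** transpose Z)"

text \<open>For W an nr x nr matrix viewed as r x r blocks W_{i,j} of size n x n
  (index (i,a) = block i, position a), w = sum_i vec(W_{i,i}).\<close>
definition diag_block :: "real^('r::finite \<times> 'n::finite)^('r \<times> 'n) \<Rightarrow> 'r \<Rightarrow> real^'n^'n" where
  "diag_block W i = (\<chi> a b. W $ (i, a) $ (i, b))"

definition wvec :: "real^('r::finite \<times> 'n::finite)^('r \<times> 'n) \<Rightarrow> real^('n \<times> 'n)" where
  "wvec W = (\<Sum>i\<in>UNIV. vecm (diag_block W i))"

definition cos_theta :: "real^'r^'n \<Rightarrow> real^'r^'n \<Rightarrow> real \<Rightarrow> real" where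
  "cos_theta X Z t = Sup {(err_vec X Z \<bullet> (jac X *v y - wvec W)) /
                            (norm (err_vec X Z) * norm (jac X *v y - wvec W)) | y W.
       jac X *v y - wvec W \<noteq> 0 \<and> psd W \<and>
       frob_inner (transpose (jac X) ** jac X) W /
          (norm (err_vec X Z) * norm (jac X *v y - wvec W)) = 2 * t}"

definition psi :: "real \<Rightarrow> real \<Rightarrow> real \<Rightarrow> real" where
  "psi \<alpha> \<beta> t = (if t / \<beta> \<le> \<alpha>
      then (t / \<beta>) * \<alpha> + sqrt (1 - (t / \<beta>)^2) * sqrt (1 - \<alpha>^2)
      else 1)"

end

theory Submission
  imports Defs
begin

(* Since beta > 0, sigma_min X > 0, so X has full column rank and Z = X C + Z_perp with
   X^T Z_perp = 0.  With g = vec(Z_perp Z_perp^T), the vector e + g lies in the range of J while g is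
   orthogonal to that range; hence |e|^2 = |e + g|^2 + |g|^2, alpha = |g| / |e| and
   sqrt(1 - alpha^2) = |e + g| / |e|.

   Put rho = min(t / beta, alpha).  The feasible point uses the direction
   J y - w = sqrt(1 - rho^2) D / |D| - rho g / |g|, with D in the range of J aligned with e + g; the
   PSD part realising w = g is W_0 = sum_i vec(z_i m^T) vec(z_i m^T)^T (z_i the columns of Z_perp, m a
   unit eigenvector of X^T X for sigma_min^2), of cost 2 sigma_min^2 tr(Z_perp Z_perp^T).  Its
   objective value is rho alpha + sqrt(1 - rho^2) sqrt(1 - alpha^2) = psi, and the remaining slack in
   the cost constraint is absorbed by multiples of vec(X) vec(X)^T. *)

section \<open>Matrix and vectorisation algebra\<close>

lemma transpose_add: "transpose (A + B) = transpose A + transpose B"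
  by (simp add: transpose_def vec_eq_iff)

lemma transpose_diff: "transpose (A - B) = transpose A - transpose B"
  by (simp add: transpose_def vec_eq_iff)

lemma transpose_zero [simp]: "transpose 0 = 0"
  by (simp add: transpose_def vec_eq_iff)

lemma matrix_add_rdistrib: "(B + C) ** A = B ** A + C ** A"
  by (vector matrix_matrix_mult_def sum.distrib[symmetric] field_simps)

lemma matrix_diff_ldistrib: "A ** (B - C) = A ** B - A ** (C :: real^_^_)"
  by (vector matrix_matrix_mult_def sum_subtractf[symmetric] field_simps)

lemma matrix_diff_rdistrib: "(B - C) ** A = B ** A - C ** (A :: real^_^_)"
  by (vector matrix_matrix_mult_def sum_subtractf[symmetric] field_simps)

lemma vecm_nth [simp]: "vecm M $ p = M $ snd p $ fst p"
  by (simp add: vecm_def)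

lemma vecm_add: "vecm (A + B) = vecm A + vecm B"
  by (simp add: vec_eq_iff)

lemma vecm_diff: "vecm (A - B) = vecm A - vecm B"
  by (simp add: vec_eq_iff)

lemma vecm_scaleR: "vecm (c *\<^sub>R A) = c *\<^sub>R vecm A"
  by (simp add: vec_eq_iff)

lemma vecm_sum: "vecm (\<Sum>i\<in>I. f i) = (\<Sum>i\<in>I. vecm (f i))"
  by (simp add: vec_eq_iff sum_component)

lemma vecm_eq_0_iff [simp]: "vecm A = 0 \<longleftrightarrow> A = 0"
  by (auto simp: vec_eq_iff)

lemma surj_vecm: "surj vecm"
proof (rule surjI)
  show "vecm (\<chi> i j. v $ (j, i)) = v" for v
    by (simp add: vec_eq_iff)
qed

lemma inner_vecm: "vecm A \<bullet> vecm B = frob_inner A B"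
proof -
  have "vecm A \<bullet> vecm B = (\<Sum>p\<in>UNIV \<times> UNIV. A $ snd p $ fst p * B $ snd p $ fst p)"
    by (simp add: inner_vec_def UNIV_Times_UNIV)
  also have "\<dots> = (\<Sum>j\<in>UNIV. \<Sum>i\<in>UNIV. A $ i $ j * B $ i $ j)"
    by (simp add: sum.cartesian_product case_prod_unfold)
  also have "\<dots> = frob_inner A B"
    unfolding frob_inner_def by (rule sum.swap)
  finally show ?thesis .
qed

lemma norm_vecm: "norm (vecm A) = frob_norm A"
  by (simp add: norm_eq_sqrt_inner inner_vecm frob_inner_def frob_norm_def power2_eq_square)

lemma frob_inner_eq_trace: "frob_inner A B = trace (transpose A ** B)"
  unfolding frob_inner_def trace_def matrix_matrix_mult_def transpose_def
  by (subst sum.swap) simp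

lemma frob_inner_add_right: "frob_inner M (A + B) = frob_inner M A + frob_inner M B"
  by (simp add: frob_inner_def distrib_left sum.distrib)

lemma frob_inner_scaleR_right: "frob_inner M (c *\<^sub>R A) = c * frob_inner M A"
  by (simp add: frob_inner_def sum_distrib_left mult_ac)

lemma frob_inner_sum_right: "frob_inner M (\<Sum>i\<in>I. W i) = (\<Sum>i\<in>I. frob_inner M (W i))"
  by (simp add: inner_vecm[symmetric] vecm_sum inner_sum_right)

lemma inner_gram_matrix:
  fixes X :: "real^'c^'m"
  shows "x \<bullet> ((transpose X ** X) *v x) = (norm (X *v x))\<^sup>2"
proof -
  have "x \<bullet> ((transpose X ** X) *v x) = x \<bullet> ((X *v x) v* X)"
    by (simp add: matrix_vector_mul_assoc[symmetric])
  also have "\<dots> = (X *v x) \<bullet> (X *v x)"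
    by (metis inner_commute dot_lmul_matrix)
  finally show ?thesis by (simp add: power2_norm_eq_inner)
qed

section \<open>Rank-one matrices\<close>

definition dyad :: "real^'m \<Rightarrow> real^'n \<Rightarrow> real^'n^'m" where
  "dyad v z = (\<chi> a b. v $ a * z $ b)"

lemma dyad_nth [simp]: "dyad v z $ a $ b = v $ a * z $ b"
  by (simp add: dyad_def)

lemma transpose_dyad: "transpose (dyad v z) = dyad z v"
  by (simp add: transpose_def vec_eq_iff mult.commute)

lemma dyad_mult_vec: "dyad v z *v x = (z \<bullet> x) *\<^sub>R v"
  by (simp add: vec_eq_iff matrix_vector_mult_def inner_vec_def sum_distrib_left mult_ac)

lemma matrix_mult_dyad: "A ** dyad v z = dyad (A *v v) z"
  by (simp add: vec_eq_iff matrix_matrix_mult_def matrix_vector_mult_def sum_distrib_left sum_distrib_right mult_ac)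

lemma dyad_mult_dyad: "dyad v z ** dyad z' w = (z \<bullet> z') *\<^sub>R dyad v w"
  by (simp add: vec_eq_iff matrix_matrix_mult_def inner_vec_def sum_distrib_left sum_distrib_right mult_ac)

lemma sum_dyad_columns: "(\<Sum>i\<in>UNIV. dyad (column i A) (column i A)) = A ** transpose A"
  by (simp add: vec_eq_iff sum_component column_def matrix_matrix_mult_def transpose_def)

lemma trace_mult_transpose: "trace (A ** transpose A) = (\<Sum>i\<in>UNIV. (norm (column i A))\<^sup>2)"
proof -
  have "trace (A ** transpose A) = trace (transpose A ** A)"
    by (rule trace_mul_sym)
  then show ?thesis
    by (simp add: matrix_mult_transpose_dot_column trace_def power2_norm_eq_inner)
qed

lemma matrix_mult_transpose_eq_0_iff: "A ** transpose A = 0 \<longleftrightarrow> (A :: real^'c^'m) = 0"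
proof
  assume "A ** transpose A = 0"
  then have "(\<Sum>i\<in>UNIV. (norm (column i A))\<^sup>2) = 0"
    by (simp add: trace_mult_transpose[symmetric] trace_def)
  then have "column i A = 0" for i
    by (simp add: sum_nonneg_eq_0_iff)
  then show "A = 0"
    by (simp add: vec_eq_iff column_def)
qed simp

lemma frob_norm_dyad_sym:
  fixes v z :: "real^'n"
  shows "(frob_norm (dyad v z + dyad z v))\<^sup>2 = 2 * (norm v)\<^sup>2 * (norm z)\<^sup>2 + 2 * (v \<bullet> z)\<^sup>2"
proof -
  have sq: "(norm x)\<^sup>2 = (\<Sum>a\<in>UNIV. (x $ a)\<^sup>2)" for x :: "real^'n"
    unfolding power2_norm_eq_inner by (simp add: inner_vec_def power2_eq_square)
  have "(frob_norm (dyad v z + dyad z v))\<^sup>2 = (\<Sum>a\<in>UNIV. \<Sum>b\<in>UNIV. (v $ a * z $ b + z $ a * v $ b)\<^sup>2)"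
    unfolding frob_norm_def by (simp add: sum_nonneg)
  also have "\<dots> = (\<Sum>a\<in>UNIV. \<Sum>b\<in>UNIV. (v $ a)\<^sup>2 * (z $ b)\<^sup>2)
      + 2 * (\<Sum>a\<in>UNIV. \<Sum>b\<in>UNIV. (v $ a * z $ a) * (v $ b * z $ b))
      + (\<Sum>a\<in>UNIV. \<Sum>b\<in>UNIV. (v $ b)\<^sup>2 * (z $ a)\<^sup>2)"
    by (simp add: power2_sum sum.distrib sum_distrib_left power_mult_distrib algebra_simps)
  also have "(\<Sum>a\<in>UNIV. \<Sum>b\<in>UNIV. (v $ b)\<^sup>2 * (z $ a)\<^sup>2) = (\<Sum>a\<in>UNIV. \<Sum>b\<in>UNIV. (v $ a)\<^sup>2 * (z $ b)\<^sup>2)"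
    by (subst sum.swap) simp
  also have "(\<Sum>a\<in>UNIV. \<Sum>b\<in>UNIV. (v $ a)\<^sup>2 * (z $ b)\<^sup>2) = (norm v)\<^sup>2 * (norm z)\<^sup>2"
    unfolding sq by (simp add: sum_product)
  also have "(\<Sum>a\<in>UNIV. \<Sum>b\<in>UNIV. (v $ a * z $ a) * (v $ b * z $ b)) = (v \<bullet> z)\<^sup>2"
    by (simp add: inner_vec_def power2_eq_square sum_product)
  finally show ?thesis by simp
qed

lemma frob_inner_gram_dyad: "frob_inner (transpose J ** J) (dyad u u) = (norm (J *v u))\<^sup>2"
proof -
  have "frob_inner (transpose J ** J) (dyad u u) = u \<bullet> ((transpose J ** J) *v u)"
    by (simp add: frob_inner_def inner_vec_def matrix_vector_mult_def sum_distrib_left mult_ac)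
  then show ?thesis by (simp add: inner_gram_matrix)
qed

section \<open>Positive semidefinite matrices and the block diagonal map\<close>

lemma psd_dyad_self: "psd (dyad u u)"
  unfolding psd_def by (simp add: transpose_dyad dyad_mult_vec inner_commute)

lemma psd_add: "psd A \<Longrightarrow> psd B \<Longrightarrow> psd (A + B)"
  unfolding psd_def by (simp add: transpose_add matrix_vector_mult_add_rdistrib inner_add_right)

lemma psd_scaleR: "psd A \<Longrightarrow> 0 \<le> c \<Longrightarrow> psd (c *\<^sub>R A)"
  unfolding psd_def by (simp add: transpose_scalar scaleR_matrix_vector_assoc[symmetric])

lemma psd_sum: "finite I \<Longrightarrow> (\<And>i. i \<in> I \<Longrightarrow> psd (W i)) \<Longrightarrow> psd (\<Sum>i\<in>I. W i)"
proof (induction I rule: finite_induct)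
  case empty
  then show ?case by (simp add: psd_def)
next
  case (insert i I)
  then show ?case by (simp add: psd_add)
qed

lemma wvec_add: "wvec (A + B) = wvec A + wvec B"
  by (simp add: wvec_def diag_block_def vec_eq_iff sum.distrib)

lemma wvec_scaleR: "wvec (c *\<^sub>R A) = c *\<^sub>R wvec A"
  by (simp add: wvec_def diag_block_def vec_eq_iff sum_distrib_left)

lemma wvec_sum: "finite I \<Longrightarrow> wvec (\<Sum>i\<in>I. W i) = (\<Sum>i\<in>I. wvec (W i))"
proof (induction I rule: finite_induct)
  case empty
  then show ?case by (simp add: wvec_def diag_block_def vec_eq_iff)
next
  case (insert i I)
  then show ?case by (simp add: wvec_add)
qed

lemma wvec_dyad_vecm: "wvec (dyad (vecm U) (vecm U)) = vecm (U ** transpose U)"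
  by (simp add: vec_eq_iff wvec_def diag_block_def matrix_matrix_mult_def transpose_def sum_component)

section \<open>The Jacobian\<close>

text \<open>Following \<open>vecm\<close>, the row \<open>(a, b)\<close> of \<open>J\<close> belongs to the entry \<open>(b, a)\<close> of an
  \<open>n \<times> n\<close> matrix and the column \<open>(k, i)\<close> to the entry \<open>Y\<^sub>i\<^sub>k\<close>.\<close>

lemma jac_exists:
  fixes X :: "real^'r::finite^'n::finite"
  shows "\<exists>J. \<forall>Y :: real^'r^'n. J *v vecm Y = vecm (X ** transpose Y + Y ** transpose X)"
proof
  define J :: "real^('r \<times> 'n)^('n \<times> 'n)" where
    "J = (\<chi> p q. (if snd q = fst p then X $ snd p $ fst q else 0) +
                 (if snd q = snd p then X $ fst p $ fst q else 0))"
  show "\<forall>Y :: real^'r^'n. J *v vecm Y = vecm (X ** transpose Y + Y ** transpose X)"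
  proof
    fix Y :: "real^'r^'n"
    have "(J *v vecm Y) $ (a, b) = vecm (X ** transpose Y + Y ** transpose X) $ (a, b)" for a b
    proof -
      let ?f = "\<lambda>k i. ((if i = a then X $ b $ k else 0) + (if i = b then X $ a $ k else 0)) * Y $ i $ k"
      have "(J *v vecm Y) $ (a, b) = (\<Sum>q\<in>UNIV. ?f (fst q) (snd q))"
        by (simp add: matrix_vector_mult_def J_def cong: if_cong)
      also have "\<dots> = (\<Sum>k\<in>UNIV. \<Sum>i\<in>UNIV. ?f k i)"
        by (subst sum.cartesian_product) (simp add: case_prod_unfold)
      also have "\<dots> = (\<Sum>k\<in>UNIV. X $ b $ k * Y $ a $ k + X $ a $ k * Y $ b $ k)"
        by (simp add: distrib_right sum.distrib if_distrib[of "\<lambda>x. x * _"] cong: if_cong)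
      also have "\<dots> = vecm (X ** transpose Y + Y ** transpose X) $ (a, b)"
        by (simp add: matrix_matrix_mult_def transpose_def sum.distrib mult.commute)
      finally show ?thesis .
    qed
    then show "J *v vecm Y = vecm (X ** transpose Y + Y ** transpose X)"
      by (simp add: vec_eq_iff split_paired_all)
  qed
qed

lemma jac_vecm:
  fixes X Y :: "real^'r::finite^'n::finite"
  shows "jac X *v vecm Y = vecm (X ** transpose Y + Y ** transpose X)"
proof -
  have "\<exists>!J. \<forall>Y :: real^'r^'n. J *v vecm Y = vecm (X ** transpose Y + Y ** transpose X)"
  proof (rule ex_ex1I[OF jac_exists])
    fix J1 J2 :: "real^('r \<times> 'n)^('n \<times> 'n)"
    assume "\<forall>Y :: real^'r^'n. J1 *v vecm Y = vecm (X ** transpose Y + Y ** transpose X)"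
      and "\<forall>Y :: real^'r^'n. J2 *v vecm Y = vecm (X ** transpose Y + Y ** transpose X)"
    then have "J1 *v vecm Y = J2 *v vecm Y" for Y :: "real^'r^'n"
      by simp
    then show "J1 = J2"
      unfolding matrix_eq using surjD[OF surj_vecm] by metis
  qed
  from theI'[OF this] show ?thesis
    unfolding jac_def by blast
qed

lemma jac_vecm_self: "jac X *v vecm X = 2 *\<^sub>R vecm (X ** transpose X)"
  unfolding jac_vecm vecm_add by (simp add: scaleR_2)

section \<open>The pseudoinverse of a matrix of full column rank\<close>

definition penrose :: "real^'c^'m \<Rightarrow> real^'m^'c \<Rightarrow> bool" where
  "penrose A B \<longleftrightarrow> A ** B ** A = A \<and> B ** A ** B = B \<and>
                    transpose (A ** B) = A ** B \<and> transpose (B ** A) = B ** A"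

lemma penrose_unique_left:
  assumes "penrose A B" and "penrose A C"
  shows "B = B ** A ** C"
proof -
  have b2: "B ** A ** B = B" and b3: "transpose (A ** B) = A ** B"
    using assms(1) unfolding penrose_def by auto
  have c1: "A ** C ** A = A" and c3: "transpose (A ** C) = A ** C"
    using assms(2) unfolding penrose_def by auto
  have "B = B ** (A ** B)"
    using b2 by (simp add: matrix_mul_assoc)
  also have "\<dots> = B ** transpose (A ** B)"
    using b3 by simp
  also have "\<dots> = B ** transpose B ** transpose (A ** C ** A)"
    using c1 by (simp add: matrix_transpose_mul matrix_mul_assoc)
  also have "\<dots> = B ** transpose (A ** B) ** transpose (A ** C)"
    by (simp add: matrix_transpose_mul matrix_mul_assoc)
  also have "\<dots> = (B ** A ** B) ** A ** C"
    using b3 c3 by (simp add: matrix_mul_assoc)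
  finally show ?thesis
    using b2 by simp
qed

lemma penrose_unique_right:
  assumes "penrose A B" and "penrose A C"
  shows "C = B ** A ** C"
proof -
  have b1: "A ** B ** A = A" and b4: "transpose (B ** A) = B ** A"
    using assms(1) unfolding penrose_def by auto
  have c2: "C ** A ** C = C" and c4: "transpose (C ** A) = C ** A"
    using assms(2) unfolding penrose_def by auto
  have "C = transpose (C ** A) ** C"
    using c2 c4 by simp
  also have "\<dots> = transpose (A ** B ** A) ** transpose C ** C"
    using b1 by (simp add: matrix_transpose_mul)
  also have "\<dots> = transpose (B ** A) ** transpose (C ** A) ** C"
    by (simp add: matrix_transpose_mul matrix_mul_assoc)
  also have "\<dots> = B ** A ** (C ** A ** C)"
    using b4 c4 by (simp add: matrix_mul_assoc)
  finally show ?thesis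
    using c2 by simp
qed

lemma penrose_unique:
  assumes "penrose A B" and "penrose A C"
  shows "B = C"
  using penrose_unique_left[OF assms] penrose_unique_right[OF assms] by simp

lemma pinv_eqI:
  assumes "penrose A B"
  shows "pinv A = B"
  unfolding pinv_def
proof (rule the_equality)
  show "A ** B ** A = A \<and> B ** A ** B = B \<and> transpose (A ** B) = A ** B \<and> transpose (B ** A) = B ** A"
    using assms by (simp add: penrose_def)
  fix C
  assume "A ** C ** A = A \<and> C ** A ** C = C \<and> transpose (A ** C) = A ** C \<and> transpose (C ** A) = C ** A"
  then have "penrose A C"
    by (simp add: penrose_def)
  with assms show "C = B"
    by (simp add: penrose_unique)
qed

lemma transpose_mult_proj_pinv:
  fixes X :: "real^'r^'n"
  assumes "invertible (transpose X ** X)"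
  shows "transpose X ** (mat 1 - X ** pinv X) = 0"
proof -
  obtain Ai where inv_r: "transpose X ** X ** Ai = mat 1" and inv_l: "Ai ** (transpose X ** X) = mat 1"
    using assms unfolding invertible_def by blast
  have "transpose Ai = transpose Ai ** (transpose X ** X ** Ai)"
    using inv_r by simp
  also have "\<dots> = transpose (transpose X ** X ** Ai) ** Ai"
    by (simp add: matrix_transpose_mul matrix_mul_assoc)
  finally have Ai_sym: "transpose Ai = Ai"
    using inv_r by simp
  have "penrose X (Ai ** transpose X)"
    unfolding penrose_def
  proof (intro conjI)
    show "X ** (Ai ** transpose X) ** X = X"
      using inv_l by (simp add: matrix_mul_assoc[symmetric])
    show "Ai ** transpose X ** X ** (Ai ** transpose X) = Ai ** transpose X"
      using inv_l by (simp add: matrix_mul_assoc)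
    show "transpose (X ** (Ai ** transpose X)) = X ** (Ai ** transpose X)"
      using Ai_sym by (simp add: matrix_transpose_mul matrix_mul_assoc)
    show "transpose (Ai ** transpose X ** X) = Ai ** transpose X ** X"
      using inv_l by (simp add: matrix_mul_assoc[symmetric])
  qed
  then have "pinv X = Ai ** transpose X"
    by (rule pinv_eqI)
  then show ?thesis
    using inv_r by (simp add: matrix_diff_ldistrib matrix_mul_assoc)
qed

section \<open>The smallest singular value\<close>

lemma inner_symmetric_matrix:
  fixes A :: "real^'n^'n"
  assumes "transpose A = A"
  shows "x \<bullet> (A *v y) = (A *v x) \<bullet> y"
proof -
  have "x \<bullet> (A *v y) = (x v* A) \<bullet> y"
    by (simp add: dot_lmul_matrix)
  also have "x v* A = transpose A *v x"
    by simp
  finally show ?thesis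
    using assms by simp
qed

lemma quadratic_nonneg_imp_linear_coeff_zero:
  fixes c d :: real
  assumes "0 \<le> d" and "\<And>t. 0 \<le> 2 * t * c + t\<^sup>2 * d"
  shows "c = 0"
proof -
  define t where "t = - c / (d + 1)"
  have t: "t * (d + 1) = - c"
    using assms(1) by (simp add: t_def)
  have "0 \<le> (2 * t * c + t\<^sup>2 * d) * (d + 1)\<^sup>2"
    using assms(2)[of t] by simp
  also have "\<dots> = 2 * c * (d + 1) * (t * (d + 1)) + d * (t * (d + 1))\<^sup>2"
    by (simp add: algebra_simps power2_eq_square)
  also have "\<dots> = - (c\<^sup>2 * (d + 2))"
    unfolding t by (simp add: algebra_simps power2_eq_square)
  finally have "c\<^sup>2 * (d + 2) \<le> 0"
    by simp
  with assms(1) show ?thesis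
    by (simp add: mult_le_0_iff)
qed

text \<open>Along \<open>x\<^sub>0 + t g\<close> with \<open>g = A x\<^sub>0 - l x\<^sub>0\<close> the excess \<open>x \<bullet> A x - l (x \<bullet> x)\<close> is a
  nonnegative quadratic in \<open>t\<close> with linear coefficient \<open>2 (g \<bullet> g)\<close>, which must therefore vanish.\<close>

lemma rayleigh_minimiser_eigenvector:
  fixes A :: "real^'n^'n"
  assumes A_sym: "transpose A = A" and min: "\<And>y. l * (y \<bullet> y) \<le> y \<bullet> (A *v y)"
    and x0: "x0 \<bullet> (A *v x0) = l * (x0 \<bullet> x0)"
  shows "A *v x0 = l *\<^sub>R x0"
proof -
  let ?q = "\<lambda>x. x \<bullet> (A *v x) - l * (x \<bullet> x)"
  define g where "g = A *v x0 - l *\<^sub>R x0"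
  have "0 \<le> 2 * t * (g \<bullet> g) + t\<^sup>2 * ?q g" for t
  proof -
    have "0 \<le> ?q (x0 + t *\<^sub>R g)"
      using min[of "x0 + t *\<^sub>R g"] by simp
    also have "\<dots> = ?q x0 + 2 * t * (g \<bullet> (A *v x0) - l * (g \<bullet> x0)) + t\<^sup>2 * ?q g"
      using inner_symmetric_matrix[OF A_sym, of x0 g]
      by (simp add: matrix_vector_right_distrib matrix_vector_mult_scaleR inner_add_left inner_add_right
          inner_commute algebra_simps power2_eq_square)
    also have "g \<bullet> (A *v x0) - l * (g \<bullet> x0) = g \<bullet> g"
      by (simp add: g_def inner_diff_right)
    finally show ?thesis
      using x0 by simp
  qed
  moreover have "0 \<le> ?q g"
    using min[of g] by simp
  ultimately have "g \<bullet> g = 0"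
    by (intro quadratic_nonneg_imp_linear_coeff_zero)
  then show ?thesis
    by (simp add: g_def)
qed

lemma symmetric_matrix_has_eigenvector:
  fixes A :: "real^'n^'n"
  assumes A_sym: "transpose A = A"
  shows "\<exists>v l. v \<noteq> 0 \<and> A *v v = l *s v"
proof -
  have "continuous_on (sphere 0 1) (\<lambda>x. x \<bullet> (A *v x))"
    by (intro continuous_intros linear_continuous_on matrix_vector_mul_bounded_linear)
  moreover have "sphere (0 :: real^'n) 1 \<noteq> {}"
    by simp
  ultimately obtain x0 where x0: "x0 \<in> sphere 0 1"
    and min: "\<forall>y\<in>sphere 0 1. x0 \<bullet> (A *v x0) \<le> y \<bullet> (A *v y)"
    using continuous_attains_inf[OF compact_sphere] by blast
  define l where "l = x0 \<bullet> (A *v x0)"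
  have "l * (y \<bullet> y) \<le> y \<bullet> (A *v y)" for y
  proof (cases "y = 0")
    case False
    then have "y /\<^sub>R norm y \<in> sphere 0 1"
      by simp
    with min have "l \<le> (y /\<^sub>R norm y) \<bullet> (A *v (y /\<^sub>R norm y))"
      unfolding l_def by blast
    also have "\<dots> = y \<bullet> (A *v y) / (norm y)\<^sup>2"
      by (simp add: matrix_vector_mult_scaleR power2_eq_square divide_inverse inverse_mult_distrib mult_ac)
    finally show ?thesis
      using False by (simp add: field_simps dot_square_norm)
  qed simp
  moreover have "x0 \<bullet> (A *v x0) = l * (x0 \<bullet> x0)"
    using x0 by (simp add: l_def dot_square_norm)
  ultimately have "A *v x0 = l *\<^sub>R x0"
    by (rule rayleigh_minimiser_eigenvector[OF A_sym])
  moreover have "x0 \<noteq> 0"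
    using x0 by auto
  ultimately show ?thesis
    by (auto simp: scalar_mult_eq_scaleR)
qed

lemma eigenvectors_orthogonal_symmetric:
  fixes A :: "real^'n^'n"
  assumes "transpose A = A" and "A *v u = a *\<^sub>R u" and "A *v v = b *\<^sub>R v" and "a \<noteq> b"
  shows "u \<bullet> v = 0"
proof -
  have "a * (u \<bullet> v) = (A *v u) \<bullet> v"
    using assms(2) by simp
  also have "\<dots> = u \<bullet> (A *v v)"
    using inner_symmetric_matrix[OF assms(1)] by simp
  also have "\<dots> = b * (u \<bullet> v)"
    using assms(3) by simp
  finally have "(a - b) * (u \<bullet> v) = 0"
    by (simp add: algebra_simps)
  with assms(4) show ?thesis
    by simp
qed

text \<open>Picking one eigenvector per eigenvalue gives an orthogonal, hence independent, family.\<close>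

lemma finite_eigenvalues_symmetric:
  fixes A :: "real^'n^'n"
  assumes A_sym: "transpose A = A"
  shows "finite {l. \<exists>v. v \<noteq> 0 \<and> A *v v = l *s v}"
proof -
  define S where "S = {l. \<exists>v. v \<noteq> 0 \<and> A *v v = l *s v}"
  define ev where "ev l = (SOME v. v \<noteq> 0 \<and> A *v v = l *s v)" for l
  have ev: "ev l \<noteq> 0 \<and> A *v ev l = l *\<^sub>R ev l" if "l \<in> S" for l
  proof -
    have "\<exists>v. v \<noteq> 0 \<and> A *v v = l *s v"
      using that by (simp add: S_def)
    then have "ev l \<noteq> 0 \<and> A *v ev l = l *s ev l"
      unfolding ev_def by (rule someI_ex)
    then show ?thesis
      by (simp add: scalar_mult_eq_scaleR)
  qed
  have orth: "ev l1 \<bullet> ev l2 = 0" if "l1 \<in> S" "l2 \<in> S" "l1 \<noteq> l2" for l1 l2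
    using eigenvectors_orthogonal_symmetric[OF A_sym] ev that by blast
  have inj: "inj_on ev S"
  proof (rule inj_onI)
    fix l1 l2
    assume l: "l1 \<in> S" "l2 \<in> S" "ev l1 = ev l2"
    show "l1 = l2"
    proof (rule ccontr)
      assume "l1 \<noteq> l2"
      then have "ev l1 \<bullet> ev l1 = 0"
        using orth[OF l(1,2)] l(3) by simp
      then show False
        using ev[OF l(1)] by simp
    qed
  qed
  have "pairwise orthogonal (ev ` S)"
    unfolding pairwise_def orthogonal_def using orth by (metis imageE)
  moreover have "0 \<notin> ev ` S"
    using ev by auto
  ultimately have "independent (ev ` S)"
    by (rule pairwise_orthogonal_independent)
  then have "finite (ev ` S)"
    by (rule independent_imp_finite)
  then show ?thesis
    using inj finite_imageD unfolding S_def by blast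
qed

lemma least_gram_eigenvalue:
  fixes X :: "real^'r^'n"
  defines "S \<equiv> {l. \<exists>v. v \<noteq> 0 \<and> (transpose X ** X) *v v = l *s v}"
  shows "Min S \<in> S" and "0 \<le> Min S" and "\<And>l. l \<in> S \<Longrightarrow> Min S \<le> l"
proof -
  have sym: "transpose (transpose X ** X) = transpose X ** X"
    by (simp add: matrix_transpose_mul)
  have fin: "finite S" and ne: "S \<noteq> {}"
    unfolding S_def using finite_eigenvalues_symmetric[OF sym] symmetric_matrix_has_eigenvector[OF sym]
    by auto
  show Min: "Min S \<in> S"
    using fin ne by (rule Min_in)
  show "Min S \<le> l" if "l \<in> S" for l
    using fin that by simp
  obtain v where "v \<noteq> 0" and v: "(transpose X ** X) *v v = Min S *s v"
    using Min unfolding S_def by blast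
  have "Min S * (v \<bullet> v) = (norm (X *v v))\<^sup>2"
    using inner_gram_matrix[of v X] v by (simp add: scalar_mult_eq_scaleR)
  then have "0 \<le> Min S * (v \<bullet> v)"
    by simp
  moreover have "0 < v \<bullet> v"
    using \<open>v \<noteq> 0\<close> by simp
  ultimately show "0 \<le> Min S"
    by (simp add: zero_le_mult_iff)
qed

lemma sigma_min_nonneg: "0 \<le> sigma_min X"
  using least_gram_eigenvalue(2) by (simp add: sigma_min_def)

lemma sigma_min_attained: "\<exists>m. norm m = 1 \<and> norm (X *v m) = sigma_min X"
proof -
  obtain v where "v \<noteq> 0" and v: "(transpose X ** X) *v v = (sigma_min X)\<^sup>2 *\<^sub>R v"
    using least_gram_eigenvalue(1,2)[of X] by (auto simp: sigma_min_def scalar_mult_eq_scaleR)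
  define m where "m = v /\<^sub>R norm v"
  have "norm m = 1"
    using \<open>v \<noteq> 0\<close> by (simp add: m_def)
  moreover have "(transpose X ** X) *v m = (sigma_min X)\<^sup>2 *\<^sub>R m"
    using v by (simp add: m_def matrix_vector_mult_scaleR)
  then have "m \<bullet> ((transpose X ** X) *v m) = (sigma_min X)\<^sup>2"
    using \<open>norm m = 1\<close> by (simp add: dot_square_norm)
  then have "(norm (X *v m))\<^sup>2 = (sigma_min X)\<^sup>2"
    by (simp add: inner_gram_matrix)
  then have "norm (X *v m) = sigma_min X"
    using power2_eq_imp_eq norm_ge_zero sigma_min_nonneg by blast
  ultimately show ?thesis
    by blast
qed

lemma sigma_min_0 [simp]: "sigma_min (0 :: real^'r^'n) = 0"
proof -
  obtain m :: "real^'r" where "norm ((0 :: real^'r^'n) *v m) = sigma_min (0 :: real^'r^'n)"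
    using sigma_min_attained by blast
  then show ?thesis
    by simp
qed

lemma invertible_gram_if_sigma_min_nonzero:
  assumes "sigma_min X \<noteq> 0"
  shows "invertible (transpose X ** X)"
proof (rule ccontr)
  assume "\<not> invertible (transpose X ** X)"
  then obtain v where "v \<noteq> 0" and "(transpose X ** X) *v v = 0 *s v"
    unfolding invertible_left_inverse matrix_left_invertible_ker by auto
  then have "Min {l. \<exists>v. v \<noteq> 0 \<and> (transpose X ** X) *v v = l *s v} \<le> 0"
    using least_gram_eigenvalue(3) by blast
  with assms show False
    using least_gram_eigenvalue(2)[of X] by (simp add: sigma_min_def)
qed

section \<open>Geometry of the error vector\<close>

lemma err_vec_add_gram_in_range:
  fixes X Zp :: "real^'r^'n" and C :: "real^'r^'r"
  assumes Z: "Z = X ** C + Zp"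
  shows "err_vec X Z + vecm (Zp ** transpose Zp) \<in> range ((*v) (jac X))"
proof -
  define Y where "Y = X - Zp ** transpose C - Zp ** transpose C - X ** C ** transpose C"
  define E where "E = X ** transpose X - Z ** transpose Z + Zp ** transpose Zp"
  have "X ** transpose Y + Y ** transpose X = E + E"
    unfolding Y_def E_def Z
    by (simp only: transpose_add transpose_diff matrix_transpose_mul transpose_transpose
        matrix_add_ldistrib matrix_add_rdistrib matrix_diff_ldistrib matrix_diff_rdistrib matrix_mul_assoc)
      (simp add: algebra_simps)
  then have "jac X *v vecm ((1/2) *\<^sub>R Y) = err_vec X Z + vecm (Zp ** transpose Zp)"
    by (simp add: vecm_scaleR matrix_vector_mult_scaleR jac_vecm vecm_add E_def err_vec_def vecm_diff
        flip: scaleR_2)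
  then show ?thesis
    by (rule range_eqI[OF sym])
qed

lemma gram_orthogonal_jac_range:
  fixes X Zp :: "real^'r^'n"
  assumes XZp: "transpose X ** Zp = 0"
  shows "vecm (Zp ** transpose Zp) \<bullet> (jac X *v y) = 0"
proof -
  obtain Y where y: "y = vecm Y"
    using surjD[OF surj_vecm] by blast
  let ?G = "Zp ** transpose Zp"
  have G_sym: "transpose ?G = ?G"
    by (simp add: matrix_transpose_mul)
  have XG: "transpose X ** ?G = 0"
    using XZp by (simp add: matrix_mul_assoc)
  have GX: "?G ** X = 0"
    using arg_cong[OF XG, of transpose] by (simp add: matrix_transpose_mul G_sym)
  have "vecm ?G \<bullet> (jac X *v y) = trace (?G ** (X ** transpose Y + Y ** transpose X))"
    by (simp add: y jac_vecm inner_vecm frob_inner_eq_trace G_sym)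
  also have "\<dots> = trace (?G ** X ** transpose Y) + trace (transpose X ** (?G ** Y))"
    by (simp add: matrix_add_ldistrib trace_add matrix_mul_assoc trace_mul_sym[of "?G ** Y"])
  also have "\<dots> = 0"
    using XG GX by (simp add: matrix_mul_assoc trace_def)
  finally show ?thesis .
qed

lemma err_vec_split:
  fixes X Z :: "real^'r^'n"
  assumes "invertible (transpose X ** X)"
  defines "Zp \<equiv> (mat 1 - X ** pinv X) ** Z"
  shows "err_vec X Z + vecm (Zp ** transpose Zp) \<in> range ((*v) (jac X))"
    and "\<And>y. vecm (Zp ** transpose Zp) \<bullet> (jac X *v y) = 0"
    and "(err_vec X Z + vecm (Zp ** transpose Zp)) \<bullet> vecm (Zp ** transpose Zp) = 0"
    and "transpose X ** Zp = 0"
proof -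
  have "Z = X ** (pinv X ** Z) + Zp"
    by (simp add: Zp_def matrix_diff_rdistrib matrix_mul_assoc)
  then show range: "err_vec X Z + vecm (Zp ** transpose Zp) \<in> range ((*v) (jac X))"
    by (rule err_vec_add_gram_in_range)
  show "transpose X ** Zp = 0"
    using transpose_mult_proj_pinv[OF assms(1)] by (simp add: Zp_def matrix_mul_assoc)
  then show orth: "vecm (Zp ** transpose Zp) \<bullet> (jac X *v y) = 0" for y
    by (rule gram_orthogonal_jac_range)
  from range obtain y where "err_vec X Z + vecm (Zp ** transpose Zp) = jac X *v y"
    by blast
  then show "(err_vec X Z + vecm (Zp ** transpose Zp)) \<bullet> vecm (Zp ** transpose Zp) = 0"
    using orth[of y] by (simp add: inner_commute)
qed

text \<open>Since \<open>X m\<close> is orthogonal to every column \<open>z\<^sub>i\<close> of \<open>Zp\<close>, the rank-one block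
  \<open>U\<^sub>i = z\<^sub>i m\<^sup>T\<close> costs \<open>\<parallel>J vec(U\<^sub>i)\<parallel>\<^sup>2 = 2 \<parallel>X m\<parallel>\<^sup>2 \<parallel>z\<^sub>i\<parallel>\<^sup>2\<close>.\<close>

lemma perp_psd_witness:
  fixes X Zp :: "real^'r^'n" and m :: "real^'r"
  assumes XZp: "transpose X ** Zp = 0" and m: "norm m = 1"
  obtains W0 where "psd W0" and "wvec W0 = vecm (Zp ** transpose Zp)"
    and "frob_inner (transpose (jac X) ** jac X) W0 = 2 * (norm (X *v m))\<^sup>2 * trace (Zp ** transpose Zp)"
proof
  define U where "U i = dyad (column i Zp) m" for i
  define W0 where "W0 = (\<Sum>i\<in>UNIV. dyad (vecm (U i)) (vecm (U i)))"
  show "psd W0"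
    unfolding W0_def by (rule psd_sum) (simp_all add: psd_dyad_self)
  have "U i ** transpose (U i) = dyad (column i Zp) (column i Zp)" for i
    using m by (simp add: U_def transpose_dyad dyad_mult_dyad dot_square_norm)
  then show "wvec W0 = vecm (Zp ** transpose Zp)"
    by (simp add: W0_def wvec_sum wvec_dyad_vecm sum_dyad_columns flip: vecm_sum)
  have orth: "(X *v m) \<bullet> column i Zp = 0" for i
  proof -
    have "(X *v m) \<bullet> column i Zp = (transpose X *v column i Zp) \<bullet> m"
      using dot_lmul_matrix[of "column i Zp" X m] by (simp add: inner_commute)
    also have "transpose X *v column i Zp = column i (transpose X ** Zp)"
      by (simp add: vec_eq_iff column_def matrix_vector_mult_def matrix_matrix_mult_def transpose_def)
    finally show ?thesis
      using XZp by (simp add: column_def inner_vec_def)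
  qed
  have "(norm (jac X *v vecm (U i)))\<^sup>2 = 2 * (norm (X *v m))\<^sup>2 * (norm (column i Zp))\<^sup>2" for i
  proof -
    have XU: "X ** transpose (U i) = dyad (X *v m) (column i Zp)"
      by (simp add: U_def transpose_dyad matrix_mult_dyad)
    have "U i ** transpose X = transpose (X ** transpose (U i))"
      by (simp add: matrix_transpose_mul)
    then have "jac X *v vecm (U i) = vecm (dyad (X *v m) (column i Zp) + dyad (column i Zp) (X *v m))"
      by (simp add: jac_vecm XU transpose_dyad)
    then show ?thesis
      by (simp add: norm_vecm frob_norm_dyad_sym orth)
  qed
  then show "frob_inner (transpose (jac X) ** jac X) W0 = 2 * (norm (X *v m))\<^sup>2 * trace (Zp ** transpose Zp)"
    by (simp add: W0_def frob_inner_sum_right frob_inner_gram_dyad trace_mult_transpose sum_distrib_left)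
qed

lemma orthogonal_norm_ratio:
  fixes e g :: "'a::real_inner"
  assumes "(e + g) \<bullet> g = 0" and "e \<noteq> 0"
  shows "0 \<le> norm g / norm e" and "norm g / norm e \<le> 1"
    and "sqrt (1 - (norm g / norm e)\<^sup>2) = norm (e + g) / norm e"
proof -
  have "orthogonal (e + g) (- g)"
    using assms(1) by (simp add: orthogonal_def)
  from norm_add_Pythagorean[OF this]
  have pythagoras: "(norm e)\<^sup>2 = (norm (e + g))\<^sup>2 + (norm g)\<^sup>2"
    by simp
  then have "(norm g)\<^sup>2 \<le> (norm e)\<^sup>2"
    by simp
  then have "norm g \<le> norm e"
    by (rule power2_le_imp_le) simp
  then show "0 \<le> norm g / norm e" and "norm g / norm e \<le> 1"
    using assms(2) by simp_all
  have "1 - (norm g / norm e)\<^sup>2 = ((norm e)\<^sup>2 - (norm g)\<^sup>2) / (norm e)\<^sup>2"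
    using assms(2) by (simp add: power_divide diff_divide_distrib)
  also have "\<dots> = (norm (e + g) / norm e)\<^sup>2"
    using pythagoras by (simp add: power_divide)
  finally show "sqrt (1 - (norm g / norm e)\<^sup>2) = norm (e + g) / norm e"
    by simp
qed

section \<open>Feasible points of the optimisation problem\<close>

lemma cos_theta_ge_feasible:
  assumes "err_vec X Z \<noteq> 0" and "psd W" and "jac X *v y - wvec W \<noteq> 0"
    and "frob_inner (transpose (jac X) ** jac X) W
           = 2 * t * (norm (err_vec X Z) * norm (jac X *v y - wvec W))"
  shows "err_vec X Z \<bullet> (jac X *v y - wvec W) / (norm (err_vec X Z) * norm (jac X *v y - wvec W))
           \<le> cos_theta X Z t"
proof -
  let ?obj = "\<lambda>V. err_vec X Z \<bullet> V / (norm (err_vec X Z) * norm V)"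
  define S where "S = {?obj (jac X *v y - wvec W) | y W.
       jac X *v y - wvec W \<noteq> 0 \<and> psd W \<and>
       frob_inner (transpose (jac X) ** jac X) W /
          (norm (err_vec X Z) * norm (jac X *v y - wvec W)) = 2 * t}"
  have "frob_inner (transpose (jac X) ** jac X) W /
      (norm (err_vec X Z) * norm (jac X *v y - wvec W)) = 2 * t"
    using assms(1,3,4) by simp
  then have "?obj (jac X *v y - wvec W) \<in> S"
    unfolding S_def using assms(2,3) by blast
  moreover have "bdd_above S"
  proof (rule bdd_aboveI)
    fix x assume "x \<in> S"
    then obtain V where x: "x = ?obj V" and "V \<noteq> 0"
      unfolding S_def by blast
    then have "0 < norm (err_vec X Z) * norm V"
      using assms(1) by simp
    with norm_cauchy_schwarz[of "err_vec X Z" V] show "x \<le> 1"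
      unfolding x by (simp add: divide_le_eq_1)
  qed
  ultimately show ?thesis
    unfolding cos_theta_def S_def[symmetric] by (rule cSup_upper)
qed

text \<open>As \<open>J vec(X) = 2 vec(X X\<^sup>T) = 2 wvec(vec(X) vec(X)\<^sup>T)\<close>, adding \<open>\<mu> vec(X) vec(X)\<^sup>T\<close>
  to \<open>W\<close> and \<open>\<mu>/2 vec(X)\<close> to \<open>y\<close> leaves \<open>J y - w\<close> unchanged and raises the cost by
  \<open>\<mu> \<parallel>J vec(X)\<parallel>\<^sup>2\<close>.\<close>

lemma feasible_raise_cost:
  fixes X :: "real^'r^'n"
  assumes "X \<noteq> 0" and "psd W" and "frob_inner (transpose (jac X) ** jac X) W \<le> c"
  obtains y' W' where "psd W'" and "jac X *v y' - wvec W' = jac X *v y - wvec W"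
    and "frob_inner (transpose (jac X) ** jac X) W' = c"
proof
  let ?J = "jac X" and ?u = "vecm X"
  have "?J *v ?u \<noteq> 0"
    using assms(1) by (simp add: jac_vecm_self matrix_mult_transpose_eq_0_iff)
  then have K: "(norm (?J *v ?u))\<^sup>2 > 0"
    by simp
  define \<mu> where "\<mu> = (c - frob_inner (transpose ?J ** ?J) W) / (norm (?J *v ?u))\<^sup>2"
  have "0 \<le> \<mu>"
    using assms(3) K by (simp add: \<mu>_def)
  show "psd (W + \<mu> *\<^sub>R dyad ?u ?u)"
    using assms(2) \<open>0 \<le> \<mu>\<close> by (simp add: psd_add psd_scaleR psd_dyad_self)
  show "?J *v (y + (\<mu> / 2) *\<^sub>R ?u) - wvec (W + \<mu> *\<^sub>R dyad ?u ?u) = ?J *v y - wvec W"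
    by (simp add: matrix_vector_right_distrib matrix_vector_mult_scaleR jac_vecm_self
        wvec_add wvec_scaleR wvec_dyad_vecm)
  show "frob_inner (transpose ?J ** ?J) (W + \<mu> *\<^sub>R dyad ?u ?u) = c"
    using K by (simp add: frob_inner_add_right frob_inner_scaleR_right frob_inner_gram_dyad \<mu>_def)
qed

lemma unit_mixture_orthogonal:
  fixes d g D :: "'a::real_inner"
  assumes "g \<noteq> 0" and "D \<noteq> 0" and "D \<bullet> g = 0" and "d \<bullet> g = 0"
    and "(d - g) \<bullet> D = norm d * norm D" and "0 \<le> \<rho>" and "\<rho> \<le> 1"
  defines "V \<equiv> (sqrt (1 - \<rho>\<^sup>2) / norm D) *\<^sub>R D - (\<rho> / norm g) *\<^sub>R g"
  shows "norm V = 1" and "(d - g) \<bullet> V = \<rho> * norm g + sqrt (1 - \<rho>\<^sup>2) * norm d"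
proof -
  define c s where "c = sqrt (1 - \<rho>\<^sup>2) / norm D" and "s = \<rho> / norm g"
  have V: "V = c *\<^sub>R D - s *\<^sub>R g"
    by (simp add: V_def c_def s_def)
  have "\<rho>\<^sup>2 \<le> 1"
    using assms(6,7) by (simp add: power_le_one)
  have "V \<bullet> V = c\<^sup>2 * (D \<bullet> D) + s\<^sup>2 * (g \<bullet> g)"
    using assms(3) by (simp add: V inner_diff_left inner_diff_right inner_commute power2_eq_square)
  also have "\<dots> = 1"
    using assms(1,2) \<open>\<rho>\<^sup>2 \<le> 1\<close> by (simp add: c_def s_def dot_square_norm power_divide)
  finally show "norm V = 1"
    by (simp add: norm_eq_1)
  have "(d - g) \<bullet> V = c * (norm d * norm D) + s * (g \<bullet> g)"
    using assms(4,5) by (simp add: V inner_diff_right inner_diff_left inner_commute)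
  also have "\<dots> = \<rho> * norm g + sqrt (1 - \<rho>\<^sup>2) * norm d"
    using assms(1,2) by (simp add: c_def s_def dot_square_norm power2_eq_square)
  finally show "(d - g) \<bullet> V = \<rho> * norm g + sqrt (1 - \<rho>\<^sup>2) * norm d" .
qed

lemma exists_aligned_jac_range:
  fixes X :: "real^'r^'n"
  assumes "X \<noteq> 0" and "d \<in> range ((*v) (jac X))"
  obtains y where "jac X *v y \<noteq> 0" and "d \<bullet> (jac X *v y) = norm d * norm (jac X *v y)"
proof (cases "d = 0")
  case True
  have "jac X *v vecm X \<noteq> 0"
    using assms(1) by (simp add: jac_vecm_self matrix_mult_transpose_eq_0_iff)
  with True show ?thesis
    using that[of "vecm X"] by simp
next
  case False
  obtain y where "d = jac X *v y"
    using assms(2) by blast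
  with False show ?thesis
    using that[of y] by (simp add: dot_square_norm power2_eq_square)
qed

lemma cos_theta_ge_mixture:
  fixes X Z :: "real^'r^'n"
  defines "e \<equiv> err_vec X Z"
  assumes "X \<noteq> 0" and "e \<noteq> 0" and "g \<noteq> 0"
    and range: "e + g \<in> range ((*v) (jac X))" and orth: "\<And>y. g \<bullet> (jac X *v y) = 0"
    and "psd W0" and "wvec W0 = g" and "0 \<le> \<rho>" and "\<rho> \<le> 1"
    and cost: "\<rho> * frob_inner (transpose (jac X) ** jac X) W0 \<le> 2 * t * norm e * norm g"
  shows "(\<rho> * norm g + sqrt (1 - \<rho>\<^sup>2) * norm (e + g)) / norm e \<le> cos_theta X Z t"
proof -
  let ?J = "jac X"
  obtain yD where "?J *v yD \<noteq> 0" and aligned: "(e + g) \<bullet> (?J *v yD) = norm (e + g) * norm (?J *v yD)"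
    using exists_aligned_jac_range[OF \<open>X \<noteq> 0\<close> range] by blast
  define D where "D = ?J *v yD"
  have Dg: "D \<bullet> g = 0"
    using orth[of yD] by (simp add: D_def inner_commute)
  have "(e + g - g) \<bullet> D = (e + g) \<bullet> D - g \<bullet> D"
    by (simp only: inner_diff_left)
  also have "\<dots> = norm (e + g) * norm D"
    using aligned Dg by (simp add: D_def inner_commute)
  finally have "(e + g - g) \<bullet> D = norm (e + g) * norm D" .
  moreover have "(e + g) \<bullet> g = 0"
    using range orth by (auto simp: inner_commute)
  moreover define c s where "c = sqrt (1 - \<rho>\<^sup>2) / norm D" and "s = \<rho> / norm g"
  moreover define V where "V = c *\<^sub>R D - s *\<^sub>R g"
  ultimately have nV: "norm V = 1" and eV: "e \<bullet> V = \<rho> * norm g + sqrt (1 - \<rho>\<^sup>2) * norm (e + g)"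
    using unit_mixture_orthogonal[of g D "e + g" \<rho>] \<open>g \<noteq> 0\<close> \<open>?J *v yD \<noteq> 0\<close> Dg
      \<open>0 \<le> \<rho>\<close> \<open>\<rho> \<le> 1\<close>
    by (simp_all add: D_def)
  have V: "?J *v (c *\<^sub>R yD) - wvec (s *\<^sub>R W0) = V"
    by (simp add: V_def D_def matrix_vector_mult_scaleR wvec_scaleR \<open>wvec W0 = g\<close>)
  have "psd (s *\<^sub>R W0)"
    using \<open>psd W0\<close> \<open>0 \<le> \<rho>\<close> by (simp add: s_def psd_scaleR)
  moreover have "frob_inner (transpose ?J ** ?J) (s *\<^sub>R W0) \<le> 2 * t * (norm e * norm V)"
    using cost \<open>g \<noteq> 0\<close> nV by (simp add: s_def frob_inner_scaleR_right divide_le_eq mult_ac)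
  ultimately obtain y' W' where "psd W'"
    and "?J *v y' - wvec W' = ?J *v (c *\<^sub>R yD) - wvec (s *\<^sub>R W0)"
    and cost': "frob_inner (transpose ?J ** ?J) W' = 2 * t * (norm e * norm V)"
    by (rule feasible_raise_cost[OF \<open>X \<noteq> 0\<close>])
  with V have V': "?J *v y' - wvec W' = V"
    by simp
  have "V \<noteq> 0"
    using nV by auto
  then have "e \<bullet> V / (norm e * norm V) \<le> cos_theta X Z t"
    using cos_theta_ge_feasible[of X Z W' y' t] \<open>psd W'\<close> cost' \<open>e \<noteq> 0\<close>
    unfolding V' e_def by simp
  then show ?thesis
    using eV nV by simp
qed

lemma psi_eq_min:
  assumes "0 \<le> \<alpha>" and "\<alpha> \<le> 1"
  shows "psi \<alpha> \<beta> t = min (t / \<beta>) \<alpha> * \<alpha> + sqrt (1 - (min (t / \<beta>) \<alpha>)\<^sup>2) * sqrt (1 - \<alpha>\<^sup>2)"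
proof (cases "t / \<beta> \<le> \<alpha>")
  case False
  have "sqrt (1 - \<alpha>\<^sup>2) * sqrt (1 - \<alpha>\<^sup>2) = 1 - \<alpha>\<^sup>2"
    using assms by (simp add: power_le_one)
  with False show ?thesis
    by (simp add: psi_def power2_eq_square)
qed (simp add: psi_def)

theorem lemma16:
  fixes X Z :: "real^'r^'n"
  assumes "X ** transpose X \<noteq> Z ** transpose Z"
  defines "Zp \<equiv> (mat 1 - X ** pinv X) ** Z"
  defines "\<alpha> \<equiv> frob_norm (Zp ** transpose Zp) / frob_norm (X ** transpose X - Z ** transpose Z)"
  defines "\<beta> \<equiv> (sigma_min X)^2 / frob_norm (X ** transpose X - Z ** transpose Z)
                * (trace (Zp ** transpose Zp) / frob_norm (Zp ** transpose Zp))"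
  assumes "\<beta> > 0"
  shows "\<forall>t \<ge> 0. cos_theta X Z t \<ge> psi \<alpha> \<beta> t"
proof (intro allI impI)
  fix t :: real
  assume "0 \<le> t"
  define e g where "e = err_vec X Z" and "g = vecm (Zp ** transpose Zp)"
  have \<alpha>: "\<alpha> = norm g / norm e"
    and \<beta>: "\<beta> = (sigma_min X)\<^sup>2 * trace (Zp ** transpose Zp) / (norm e * norm g)"
    by (simp_all add: \<alpha>_def \<beta>_def e_def g_def err_vec_def norm_vecm)
  then have "(sigma_min X)\<^sup>2 * trace (Zp ** transpose Zp) / (norm e * norm g) \<noteq> 0"
    using \<open>\<beta> > 0\<close> by linarith
  then have "sigma_min X \<noteq> 0" and "e \<noteq> 0" and "g \<noteq> 0"
    by auto
  note split = err_vec_split[OF invertible_gram_if_sigma_min_nonzero[OF \<open>sigma_min X \<noteq> 0\<close>],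
      of Z, folded Zp_def e_def g_def]
  note ratio = orthogonal_norm_ratio[OF split(3) \<open>e \<noteq> 0\<close>, folded \<alpha>]
  obtain m where "norm m = 1" and m: "norm (X *v m) = sigma_min X"
    using sigma_min_attained by blast
  have "X \<noteq> 0"
    using \<open>sigma_min X \<noteq> 0\<close> by auto
  obtain W0 where "psd W0" and "wvec W0 = g"
    and cost: "frob_inner (transpose (jac X) ** jac X) W0 = 2 * (sigma_min X)\<^sup>2 * trace (Zp ** transpose Zp)"
    using perp_psd_witness[OF split(4) \<open>norm m = 1\<close>, folded g_def, unfolded m] by blast
  define \<rho> where "\<rho> = min (t / \<beta>) \<alpha>"
  have "\<rho> * \<beta> \<le> t"
    using \<open>\<beta> > 0\<close> by (simp add: \<rho>_def min_def field_simps)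
  then have cost_le: "\<rho> * frob_inner (transpose (jac X) ** jac X) W0 \<le> 2 * t * norm e * norm g"
    using \<open>e \<noteq> 0\<close> \<open>g \<noteq> 0\<close> by (simp add: cost \<beta> field_simps)
  have "0 \<le> \<rho>" and "\<rho> \<le> 1"
    using \<open>0 \<le> t\<close> \<open>\<beta> > 0\<close> ratio(1) ratio(2) by (simp_all add: \<rho>_def)
  have "psi \<alpha> \<beta> t = \<rho> * \<alpha> + sqrt (1 - \<rho>\<^sup>2) * sqrt (1 - \<alpha>\<^sup>2)"
    using psi_eq_min[OF ratio(1) ratio(2)] by (simp add: \<rho>_def)
  also have "\<dots> = (\<rho> * norm g + sqrt (1 - \<rho>\<^sup>2) * norm (e + g)) / norm e"
    using ratio(3) by (simp add: \<alpha> add_divide_distrib)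
  also have "\<dots> \<le> cos_theta X Z t"
    by (rule cos_theta_ge_mixture[of X Z g W0 \<rho> t, folded e_def, OF \<open>X \<noteq> 0\<close> \<open>e \<noteq> 0\<close> \<open>g \<noteq> 0\<close>
          split(1,2) \<open>psd W0\<close> \<open>wvec W0 = g\<close> \<open>0 \<le> \<rho>\<close> \<open>\<rho> \<le> 1\<close> cost_le])
  finally show "psi \<alpha> \<beta> t \<le> cos_theta X Z t" .
qed

end
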